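(* Assume $\Lambda=\Lambda^{\rm h}=A\mathbb Z^d$, $d=\mathsf d_s\in\{2,3\}$, $x(\ell)=\ell$, $u_0\equiv0$, and that the homogeneous site strain potential $V^{\rm h}$ satisfies (S.R), (S.L) and (S.PS). Then for every $u\in\dot{\mathscr U}^{\rm c}(\Lambda^{\rm h})$ the map $(\ell,\rho)\mapsto V^{\rm h}_{,\rho}(0)\cdot D_\rho u(\ell)$ belongs to $\ell^1(\Lambda^{\rm h}\times\Lambda^{\rm h}_* )$ and $$\sum_{\ell\in\Lambda^{\rm h}}\sum_{\rho\in\Lambda^{\rm h}_*}V^{\rm h}_{,\rho}(0)^{\rm T}D_\rho u(\ell)=0.$$
   Context: $B_R$ is the open ball of radius $R$ at $0$. $A\in\mathbb R^{d\times d}$ nonsingular, $\Lambda^{\rm h}:=A\mathbb Z^d$, $\Lambda^{\rm h}_*:=\Lambda^{\rm h}\setminus\{0\}$. For $u:\Lambda^{\rm h}\to\mathbb R^d$: $D_\rho u(\ell):=u(\ell+\rho)-u(\ell)$, $Du(\ell):=(D_\rho u(\ell))_{\rho\in\Lambda^{\rm h}_*}$; $\dot{\mathscr U}^{\rm c}(\Lambda^{\rm h})$ is the set of $u$ constant outside some ball. For $k>0$, $\mathscr L_k$ is the set of monotonically decreasing $\mathfrak w:[0,\infty)\to(0,\infty)$ with $\|\mathfrak w\|_{L^\infty}+\int_0^\infty r^{k+d-1}\mathfrak w(r)dr<\infty$. For $\mathfrak m,\lambda>0$, $\mathscr A_{\mathfrak m,\lambda}(\Lambda^{\rm h})$ is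 the set of $y:\Lambda^{\rm h}\to\mathbb R^d$ with $B_\lambda(z)\cap y(\Lambda^{\rm h})\neq\emptyset$ for all $z$ and $|y(\ell)-y(m)|\ge\mathfrak m|\ell-m|$; $\mathscr A$ is the union over $\mathfrak m,\lambda>0$. The homogeneous site strain potential $V^{\rm h}$ is a function on $\{Dw(\ell):x+w\in\mathscr A(\Lambda^{\rm h}),\ell\in\Lambda^{\rm h}\}\subset(\mathbb R^d)^{\Lambda^{\rm h}_*}$, with partial derivatives $V^{\rm h}_{,\boldsymbol\rho}(\boldsymbol g):=\partial^jV^{\rm h}(\boldsymbol g)/\partial\boldsymbol g_{\rho_1}\cdots\partial\boldsymbol g_{\rho_j}$. (S.R): $V^{\rm h}$ has partial derivatives up to order $\mathfrak n\ge3$. (S.L): with $\mathcal P(j)$ the set of partitions $\{A_1,\dots,A_k\}$ of $\{1,\dots,j\}$ into nonempty sets and $i'$ the smallest element of $A_i$, there exist $\mathfrak w_i\in\mathscr L_i$ and constants $C_j(\mathfrak m,\lambda)$ with $|V^{\rm h}_{,\boldsymbol\rho}(Dw(\ell))|\le C_j\sum_{\mathcal P(j)}\prod_i\big(\mathfrak w_{|A_i|}(|\rho_{i'}|)\prod_{m\in A_i}\delta_{\rho_{i'}\rho_m}\big)$ for all $w$ with $x+w\in\mathscr A_{\mathfrak m,\lambda}(\Lambda^{\rm h})$, $\ell$, $\boldsymbol\rho\in(\Lambda^{\rm h}_* )^j$, $j\le\mathfrak n$. (S.PS): $V^{\rm h}((-g_{-\rho})_{\rho\in\Lambda^{\rm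 h}_*})=V^{\rm h}(\boldsymbol g)$ for all $\boldsymbol g\in(\mathbb R^d)^{\Lambda^{\rm h}_*}$. *)

theory Defs
  imports "HOL-Analysis.Analysis" "HOL-Library.Disjoint_Sets"
begin

definition lattice :: "real^'d^'d \<Rightarrow> (real^'d) set" where
  "lattice A = {A *v (\<chi> i. of_int (z $ i)) | z :: int^'d. True}"

definition lattice_star :: "real^'d^'d \<Rightarrow> (real^'d) set" where
  "lattice_star A = lattice A - {0}"

definition Dstencil :: "real^'d^'d \<Rightarrow> (real^'d \<Rightarrow> real^'d) \<Rightarrow> real^'d \<Rightarrow> (real^'d \<Rightarrow> real^'d)" where
  "Dstencil A w l = (\<lambda>\<rho>. if \<rho> \<in> lattice_star A then w (l + \<rho>) - w l else 0)"

definition Uc :: "real^'d^'d \<Rightarrow> (real^'d \<Rightarrow> real^'d) set" where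
  "Uc A = {u. \<exists>R c. \<forall>l \<in> lattice A - ball 0 R. u l = c}"

definition adm :: "real^'d^'d \<Rightarrow> real \<Rightarrow> real \<Rightarrow> (real^'d \<Rightarrow> real^'d) set" where
  "adm A mm lam = {y. (\<forall>z. \<exists>l\<in>lattice A. y l \<in> ball z lam) \<and>
       (\<forall>l\<in>lattice A. \<forall>m\<in>lattice A. norm (y l - y m) \<ge> mm * norm (l - m))}"

definition adm_all :: "real^'d^'d \<Rightarrow> (real^'d \<Rightarrow> real^'d) set" where
  "adm_all A = (\<Union>mm\<in>{0<..}. \<Union>lam\<in>{0<..}. adm A mm lam)"

text \<open>Domain of the site potential: {Dw(l) : x + w admissible, l in Lambda}, x = id.\<close>
definition dom_V :: "real^'d^'d \<Rightarrow> (real^'d \<Rightarrow> real^'d) set" where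
  "dom_V A = {Dstencil A w l | w l. l \<in> lattice A \<and> (\<lambda>m. m + w m) \<in> adm_all A}"

text \<open>Iterated scalar partial derivatives of V with respect to the coordinates
  (g_rho)_i; the list [(rho1,i1),...,(rhoj,ij)] encodes
  d^j V / d(g_rho1)_i1 ... d(g_rhoj)_ij.\<close>
primrec pd :: "((real^'d \<Rightarrow> real^'d) \<Rightarrow> real) \<Rightarrow> ((real^'d) \<times> 'd) list \<Rightarrow> (real^'d \<Rightarrow> real^'d) \<Rightarrow> real" where
  "pd V [] g = V g"
| "pd V (c # cs) g = deriv (\<lambda>t. pd V cs (g(fst c := g (fst c) + t *\<^sub>R axis (snd c) 1))) 0"

definition grad_V :: "((real^'d \<Rightarrow> real^'d) \<Rightarrow> real) \<Rightarrow> real^'d \<Rightarrow> (real^'d \<Rightarrow> real^'d) \<Rightarrow> real^'d" where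
  "grad_V V \<rho> g = (\<chi> i. pd V [(\<rho>, i)] g)"

definition SR :: "real^'d^'d \<Rightarrow> nat \<Rightarrow> ((real^'d \<Rightarrow> real^'d) \<Rightarrow> real) \<Rightarrow> bool" where
  "SR A n V \<longleftrightarrow> (\<forall>cs g \<rho> i. length cs < n \<and> set (map fst cs) \<subseteq> lattice_star A \<and>
      \<rho> \<in> lattice_star A \<and> g \<in> dom_V A \<longrightarrow>
      (\<lambda>t. pd V cs (g(\<rho> := g \<rho> + t *\<^sub>R axis i 1))) differentiable (at 0))"

definition Lw :: "nat \<Rightarrow> nat \<Rightarrow> (real \<Rightarrow> real) \<Rightarrow> bool" where
  "Lw d k w \<longleftrightarrow> antimono_on {0..} w \<and> (\<forall>r\<ge>0. w r > 0) \<and> bdd_above (w ` {0..}) \<and>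
      (\<lambda>r. r ^ (k + d - 1) * w r) integrable_on {0..}"

definition SL :: "real^'d^'d \<Rightarrow> nat \<Rightarrow> ((real^'d \<Rightarrow> real^'d) \<Rightarrow> real) \<Rightarrow> bool" where
  "SL A n V \<longleftrightarrow> (\<exists>(w :: nat \<Rightarrow> real \<Rightarrow> real) (C :: nat \<Rightarrow> real \<Rightarrow> real \<Rightarrow> real).
      (\<forall>k\<in>{1..n}. Lw CARD('d) k (w k)) \<and>
      (\<forall>mm>0. \<forall>lam>0. \<forall>u l cs. (\<lambda>m. m + u m) \<in> adm A mm lam \<and> l \<in> lattice A \<and>
          1 \<le> length cs \<and> length cs \<le> n \<and> set (map fst cs) \<subseteq> lattice_star A \<longrightarrow>
          \<bar>pd V cs (Dstencil A u l)\<bar> \<le> C (length cs) mm lam *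
            (\<Sum>P\<in>{P. partition_on {..<length cs} P}.
               \<Prod>B\<in>P. w (card B) (norm (fst (cs ! Min B))) *
                        (\<Prod>m\<in>B. if fst (cs ! Min B) = fst (cs ! m) then 1 else 0))))"

definition SPS :: "real^'d^'d \<Rightarrow> ((real^'d \<Rightarrow> real^'d) \<Rightarrow> real) \<Rightarrow> bool" where
  "SPS A V \<longleftrightarrow> (\<forall>g\<in>dom_V A. V (\<lambda>\<rho>. if \<rho> \<in> lattice_star A then - g (- \<rho>) else 0) = V g)"

end

theory Submission
  imports Defs
begin

text \<open>For a fixed bond vector \<rho>, the sum over \<ell> of \<open>D\<^sub>\<rho> u(\<ell>)\<close> vanishes: \<open>u\<close> equals a constant
  \<open>c\<close> off a finite set, and the translation \<open>\<ell> \<mapsto> \<ell> + \<rho>\<close> permutes the lattice, so the sums of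
  \<open>u(\<ell> + \<rho>) - c\<close> and of \<open>u(\<ell>) - c\<close> coincide. To sum over \<rho> as well, and to exchange the two
  sums, the double series must converge absolutely. This follows from the decay (S.L) applied to
  the undeformed lattice, \<open>|V\<^sub>,\<^sub>\<rho>(0)| \<le> K w\<^sub>1(|\<rho>|)\<close>, together with
  \<open>\<Sum>\<^sub>\<rho> w\<^sub>1(|\<rho>|) < \<infinity>\<close>, which is obtained by grouping the lattice points into cubic shells
  and comparing with \<open>\<integral>\<^sub>0\<^sup>\<infinity> r\<^sup>d w\<^sub>1(r) dr < \<infinity>\<close>.\<close>

definition of_int_vec :: "int^'d \<Rightarrow> real^'d" where
  "of_int_vec z = (\<chi> i. of_int (z $ i))"

lemma of_int_vec_add [simp]: "of_int_vec (a + b) = of_int_vec a + of_int_vec b"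
  and of_int_vec_uminus [simp]: "of_int_vec (- a) = - of_int_vec a"
  and of_int_vec_0 [simp]: "of_int_vec 0 = 0"
  and of_int_vec_eq_iff [simp]: "of_int_vec a = of_int_vec b \<longleftrightarrow> a = b"
  by (auto simp: of_int_vec_def vec_eq_iff)

lemma lattice_eq_range: "lattice A = range (\<lambda>z. A *v of_int_vec z)"
  unfolding lattice_def of_int_vec_def by auto

lemma zero_in_lattice: "0 \<in> lattice A"
  unfolding lattice_eq_range by (auto intro!: image_eqI[where x = 0])

lemma lattice_add: "l \<in> lattice A \<Longrightarrow> m \<in> lattice A \<Longrightarrow> l + m \<in> lattice A"
  unfolding lattice_eq_range
  by (clarsimp simp: matrix_vector_right_distrib[symmetric])
     (metis of_int_vec_add rangeI)

lemma lattice_uminus: "l \<in> lattice A \<Longrightarrow> - l \<in> lattice A"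
  unfolding lattice_eq_range
  by (clarsimp simp: vec.neg[symmetric]) (metis of_int_vec_uminus rangeI)

lemma lattice_diff: "l \<in> lattice A \<Longrightarrow> m \<in> lattice A \<Longrightarrow> l - m \<in> lattice A"
  using lattice_add[OF _ lattice_uminus] by (metis diff_conv_add_uminus)

lemma bij_betw_lattice_translate:
  "\<rho> \<in> lattice A \<Longrightarrow> bij_betw (\<lambda>l. l + \<rho>) (lattice A) (lattice A)"
  by (rule bij_betwI[where g = "\<lambda>l. l - \<rho>"]) (auto intro: lattice_add lattice_diff)

lemma invertible_imp_inj_matrix_vector_mult:
  fixes A :: "real^'n^'n"
  shows "invertible A \<Longrightarrow> inj ((*v) A)"
  using matrix_left_invertible_injective unfolding invertible_def by blast

lemma invertible_norm_bounded_below: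
  fixes A :: "real^'n^'n"
  assumes "invertible A"
  obtains c where "c > 0" "\<And>x. c * norm x \<le> norm (A *v x)"
  using linear_inj_bounded_below_pos[OF matrix_vector_mul_linear
          invertible_imp_inj_matrix_vector_mult[OF assms]] by blast

lemma inj_lattice_coordinates:
  fixes A :: "real^'d^'d"
  assumes "invertible A"
  shows "inj (\<lambda>z. A *v of_int_vec z)"
  using inj_compose[OF invertible_imp_inj_matrix_vector_mult[OF assms], of of_int_vec]
  by (simp add: inj_def comp_def)

lemma lattice_star_eq_image:
  fixes A :: "real^'d^'d"
  assumes "invertible A"
  shows "lattice_star A = (\<lambda>z. A *v of_int_vec z) ` (UNIV - {0})"
  using inj_lattice_coordinates[OF assms]
  unfolding lattice_star_def lattice_eq_range inj_def
  by (force intro: image_eqI[where x = 0])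

lemma lattice_covering:
  fixes A :: "real^'d^'d"
  assumes "invertible A"
  obtains lam where "lam > 0" "\<And>z. \<exists>l\<in>lattice A. l \<in> ball z lam"
proof -
  obtain A' where A': "A ** A' = mat 1" using assms unfolding invertible_def by blast
  obtain B where B: "B > 0" "\<And>x. norm (A *v x) \<le> B * norm x"
    using linear_bounded_pos[OF matrix_vector_mul_linear] by blast
  have "\<exists>l\<in>lattice A. l \<in> ball z (B * CARD('d) + 1)" for z
  proof -
    define y where "y = A' *v z"
    define r :: "int^'d" where "r = (\<chi> i. round (y $ i))"
    have "\<bar>(y - of_int_vec r) $ i\<bar> \<le> 1" for i
      using of_int_round_abs_le[of "y $ i"] by (simp add: r_def of_int_vec_def abs_minus_commute)
    then have "norm (y - of_int_vec r) \<le> (\<Sum>i\<in>(UNIV::'d set). 1)"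
      using norm_le_l1_cart[of "y - of_int_vec r"] sum_mono[of UNIV] by (meson order_trans)
    then have "norm (y - of_int_vec r) \<le> CARD('d)" by simp
    then have "norm (A *v (y - of_int_vec r)) \<le> B * CARD('d)"
      using B by (meson mult_left_mono order_trans less_imp_le)
    moreover have "z = A *v y" by (simp add: y_def matrix_vector_mul_assoc A')
    ultimately have "dist z (A *v of_int_vec r) < B * CARD('d) + 1"
      by (simp add: dist_norm matrix_vector_mult_diff_distrib)
    then show ?thesis unfolding lattice_eq_range by auto
  qed
  moreover have "B * CARD('d) + 1 > 0" using B by (simp add: add_pos_nonneg)
  ultimately show thesis using that by blast
qed

lemma identity_in_adm:
  fixes A :: "real^'d^'d"
  assumes "invertible A"
  obtains lam where "lam > 0" "(\<lambda>m. m) \<in> adm A 1 lam"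
proof -
  obtain lam where "lam > 0" "\<And>z. \<exists>l\<in>lattice A. l \<in> ball z lam"
    using lattice_covering[OF assms] by blast
  then show thesis using that by (simp add: adm_def)
qed

definition int_box :: "nat \<Rightarrow> (int^'d) set" where
  "int_box j = {z. \<forall>i. \<bar>z $ i\<bar> \<le> int j}"

lemma finite_int_box: "finite (int_box j :: (int^'d) set)"
  and card_int_box_le: "card (int_box j :: (int^'d) set) \<le> (2 * j + 1) ^ CARD('d)"
proof -
  let ?P = "PiE (UNIV :: 'd set) (\<lambda>_. {- int j..int j})"
  have sub: "int_box j \<subseteq> vec_lambda ` ?P"
  proof
    fix z :: "int^'d" assume "z \<in> int_box j"
    then have "(\<lambda>i. z $ i) \<in> ?P" by (auto simp: int_box_def PiE_iff abs_le_iff minus_le_iff)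
    then show "z \<in> vec_lambda ` ?P" by (intro image_eqI[of _ _ "\<lambda>i. z $ i"]) auto
  qed
  have fin: "finite ?P" by (rule finite_PiE) auto
  show "finite (int_box j :: (int^'d) set)" using finite_subset[OF sub finite_imageI[OF fin]] .
  have "card (int_box j :: (int^'d) set) \<le> card ?P"
    using card_mono[OF finite_imageI[OF fin] sub] card_image_le[OF fin, of vec_lambda] by linarith
  also have "card ?P = (2 * j + 1) ^ CARD('d)"
    by (subst card_PiE) (auto simp: nat_add_distrib nat_mult_distrib)
  finally show "card (int_box j :: (int^'d) set) \<le> (2 * j + 1) ^ CARD('d)" .
qed

definition sup_norm_int :: "int^'d \<Rightarrow> nat" where
  "sup_norm_int z = nat (Max (range (\<lambda>i. \<bar>z $ i\<bar>)))"

lemma abs_component_le_sup_norm_int: "\<bar>z $ i\<bar> \<le> int (sup_norm_int z)"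
proof -
  have "\<bar>z $ i\<bar> \<le> Max (range (\<lambda>i. \<bar>z $ i\<bar>))" by (rule Max_ge) auto
  then show ?thesis unfolding sup_norm_int_def by linarith
qed

lemma in_int_box_sup_norm_int: "z \<in> int_box (sup_norm_int z)"
  by (simp add: int_box_def abs_component_le_sup_norm_int)

lemma sup_norm_int_pos:
  assumes "z \<noteq> 0"
  shows "sup_norm_int z \<ge> 1"
proof -
  obtain i where "z $ i \<noteq> 0" using assms by (auto simp: vec_eq_iff)
  then have "1 \<le> \<bar>z $ i\<bar>" by simp
  then show ?thesis using abs_component_le_sup_norm_int[of z i] by simp
qed

lemma sup_norm_int_le_norm: "real (sup_norm_int z) \<le> norm (of_int_vec z)"
proof -
  have "Max (range (\<lambda>i. \<bar>z $ i\<bar>)) \<in> range (\<lambda>i. \<bar>z $ i\<bar>)" by (rule Max_in) auto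
  then obtain i where i: "Max (range (\<lambda>i. \<bar>z $ i\<bar>)) = \<bar>z $ i\<bar>" by (metis imageE)
  have "real (sup_norm_int z) = \<bar>of_int_vec z $ i\<bar>" by (simp add: sup_norm_int_def i of_int_vec_def)
  also have "\<dots> \<le> norm (of_int_vec z)" by (rule component_le_norm_cart)
  finally show ?thesis .
qed

lemma finite_lattice_Int_ball:
  fixes A :: "real^'d^'d"
  assumes "invertible A"
  shows "finite (lattice A \<inter> ball 0 R)"
proof -
  obtain c where c: "c > 0" "\<And>x. c * norm x \<le> norm (A *v x)"
    using invertible_norm_bounded_below[OF assms] by blast
  have "lattice A \<inter> ball 0 R \<subseteq> (\<lambda>z. A *v of_int_vec z) ` int_box (nat \<lceil>R / c\<rceil>)"
  proof
    fix l assume l: "l \<in> lattice A \<inter> ball 0 R"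
    then obtain z where z: "l = A *v of_int_vec z" unfolding lattice_eq_range by auto
    have "c * sup_norm_int z \<le> norm l"
      using c sup_norm_int_le_norm[of z] z by (meson mult_left_mono order_trans less_imp_le)
    then have "real (sup_norm_int z) \<le> R / c"
      using l c by (simp add: pos_le_divide_eq mult.commute)
    then have "int (sup_norm_int z) \<le> \<lceil>R / c\<rceil>"
      using ceiling_mono by fastforce
    then have "sup_norm_int z \<le> nat \<lceil>R / c\<rceil>"
      by (metis nat_int nat_mono)
    then have "\<bar>z $ i\<bar> \<le> int (nat \<lceil>R / c\<rceil>)" for i
      using abs_component_le_sup_norm_int[of z i] by linarith
    then have "z \<in> int_box (nat \<lceil>R / c\<rceil>)" by (simp add: int_box_def)
    then show "l \<in> (\<lambda>z. A *v of_int_vec z) ` int_box (nat \<lceil>R / c\<rceil>)" using z by auto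
  qed
  then show ?thesis using finite_int_box finite_subset by blast
qed

lemma antimono_weight_le_shell_integral:
  fixes w :: "real \<Rightarrow> real" and c :: real
  assumes w_mono: "antimono_on {0..} w" and w_nonneg: "\<And>r. r \<ge> 0 \<Longrightarrow> w r \<ge> 0"
    and int: "(\<lambda>r. r ^ d * w r) integrable_on {0..}"
    and "c > 0" "j \<ge> 1"
  shows "c ^ (d + 1) * (real j - 1) ^ d * w (c * j)
           \<le> integral {c * (real j - 1)..c * j} (\<lambda>r. r ^ d * w r)"
proof -
  have a0: "0 \<le> c * (real j - 1)" using assms by simp
  have len: "c * j - c * (real j - 1) = c" by (simp add: algebra_simps)
  have "c ^ (d + 1) * (real j - 1) ^ d * w (c * j) = c * ((c * (real j - 1)) ^ d * w (c * j))"
    by (simp add: power_mult_distrib mult_ac)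
  also have "\<dots> = integral {c * (real j - 1)..c * j} (\<lambda>_. (c * (real j - 1)) ^ d * w (c * j))"
    using a0 \<open>c > 0\<close> by (simp add: len)
  also have "\<dots> \<le> integral {c * (real j - 1)..c * j} (\<lambda>r. r ^ d * w r)"
  proof (rule integral_le)
    show "(\<lambda>r. r ^ d * w r) integrable_on {c * (real j - 1)..c * j}"
      by (rule integrable_on_subinterval[OF int]) (use a0 in auto)
    fix r assume r: "r \<in> {c * (real j - 1)..c * j}"
    then have "(c * (real j - 1)) ^ d \<le> r ^ d" and "w (c * j) \<le> w r"
      using a0 by (auto intro!: power_mono monotone_onD[OF w_mono])
    then show "(c * (real j - 1)) ^ d * w (c * j) \<le> r ^ d * w r"
      using a0 r w_nonneg \<open>c > 0\<close> by (intro mult_mono) auto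
  qed (rule integrable_const_ivl)
  finally show ?thesis .
qed

lemma sum_shell_integrals_le:
  fixes g :: "real \<Rightarrow> real" and c :: real
  assumes g_int: "g integrable_on {0..}" and g_nonneg: "\<And>r. r \<ge> 0 \<Longrightarrow> g r \<ge> 0"
    and "c > 0"
  shows "(\<Sum>j=1..N. integral {c * (real j - 1)..c * j} g) \<le> integral {0..} g"
proof -
  have "(\<Sum>j=1..N. integral {c * (real j - 1)..c * j} g) = integral {0..c * N} g"
  proof (induction N)
    case (Suc N)
    have "(\<Sum>j=1..Suc N. integral {c * (real j - 1)..c * j} g)
            = integral {0..c * N} g + integral {c * N..c * Suc N} g"
      using Suc.IH by simp
    also have "\<dots> = integral {0..c * Suc N} g"
    proof (rule Henstock_Kurzweil_Integration.integral_combine)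
      show "g integrable_on {0..c * Suc N}"
        by (rule integrable_on_subinterval[OF g_int]) auto
    qed (use \<open>c > 0\<close> in auto)
    finally show ?case .
  qed simp
  also have "\<dots> \<le> integral {0..} g"
  proof (rule integral_subset_le)
    show "g integrable_on {0..c * N}" by (rule integrable_on_subinterval[OF g_int]) auto
  qed (use g_int g_nonneg in auto)
  finally show ?thesis .
qed

lemma antimono_weight_shell_series_bounded:
  fixes w :: "real \<Rightarrow> real" and c :: real
  assumes w_mono: "antimono_on {0..} w" and w_nonneg: "\<And>r. r \<ge> 0 \<Longrightarrow> w r \<ge> 0"
    and int: "(\<lambda>r. r ^ d * w r) integrable_on {0..}"
    and "c > 0"
  obtains M where "\<And>N. (\<Sum>j=1..N. real ((2 * j + 1) ^ d) * w (c * j)) \<le> M"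
proof -
  define g where "g = (\<lambda>r. r ^ d * w r)"
  have g_int: "g integrable_on {0..}" using int by (simp add: g_def)
  define shell where "shell j = integral {c * (real j - 1)..c * j} g" for j :: nat
  have shell_ge: "c ^ (d + 1) * (real j - 1) ^ d * w (c * j) \<le> shell j" if "j \<ge> 1" for j
    unfolding shell_def g_def
    by (rule antimono_weight_le_shell_integral[OF w_mono w_nonneg int \<open>c > 0\<close> that])
  have shell_sum_le: "(\<Sum>j=1..N. shell j) \<le> integral {0..} g" for N
    unfolding shell_def
    by (rule sum_shell_integrals_le[OF g_int _ \<open>c > 0\<close>]) (use w_nonneg in \<open>simp add: g_def\<close>)
  text \<open>The first shell is set apart: on it the lower bound \<open>(j - 1)\<^sup>d\<close> of \<open>r\<^sup>d\<close> degenerates.\<close>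
  have term_le: "real ((2 * j + 1) ^ d) * w (c * j)
      \<le> 5 ^ d / c ^ (d + 1) * shell j + (if j = 1 then 3 ^ d * w c else 0)" if "j \<ge> 1" for j
  proof (cases "j = 1")
    case True
    have "0 \<le> c ^ (d + 1) * (real j - 1) ^ d * w (c * j)"
      using that w_nonneg[of "c * j"] \<open>c > 0\<close> by simp
    then have "0 \<le> shell j" using shell_ge[OF that] by linarith
    then show ?thesis using True \<open>c > 0\<close> by simp
  next
    case False
    then have "real j \<ge> 2" using that by simp
    then have "real (2 * j + 1) \<le> 5 * (real j - 1)" by simp
    from power_mono[OF this, of d]
    have "real ((2 * j + 1) ^ d) \<le> 5 ^ d * (real j - 1) ^ d"
      by (simp only: of_nat_power power_mult_distrib)
    from mult_right_mono[OF this w_nonneg[of "c * j"]]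
    have "real ((2 * j + 1) ^ d) * w (c * j) \<le> 5 ^ d * ((real j - 1) ^ d * w (c * j))"
      using \<open>c > 0\<close> by (simp add: mult.assoc)
    also have "\<dots> \<le> 5 ^ d / c ^ (d + 1) * shell j"
      using shell_ge[OF that] \<open>c > 0\<close> by (simp add: field_simps)
    finally show ?thesis using False by simp
  qed
  have "(\<Sum>j=1..N. real ((2 * j + 1) ^ d) * w (c * j))
          \<le> 5 ^ d / c ^ (d + 1) * integral {0..} g + 3 ^ d * w c" for N
  proof -
    have "(\<Sum>j=1..N. real ((2 * j + 1) ^ d) * w (c * j))
        \<le> (\<Sum>j=1..N. 5 ^ d / c ^ (d + 1) * shell j + (if j = 1 then 3 ^ d * w c else 0))"
      by (rule sum_mono) (use term_le in auto)
    also have "\<dots> = 5 ^ d / c ^ (d + 1) * (\<Sum>j=1..N. shell j)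
                     + (\<Sum>j=1..N. if j = 1 then 3 ^ d * w c else 0)"
      by (simp add: sum.distrib sum_distrib_left)
    also have "\<dots> \<le> 5 ^ d / c ^ (d + 1) * integral {0..} g + 3 ^ d * w c"
      using shell_sum_le[of N] w_nonneg[of c] \<open>c > 0\<close>
      by (intro add_mono mult_left_mono) (simp_all add: sum.delta)
    finally show ?thesis .
  qed
  then show thesis by (rule that)
qed

lemma sum_sup_norm_int_shells_le:
  fixes F :: "(int^'d) set" and h :: "nat \<Rightarrow> real"
  assumes F: "finite F" "0 \<notin> F" and h_nonneg: "\<And>j. h j \<ge> 0"
  obtains N where "(\<Sum>z\<in>F. h (sup_norm_int z)) \<le> (\<Sum>j=1..N. real ((2 * j + 1) ^ CARD('d)) * h j)"
proof -
  define N where "N = Max (insert 0 (sup_norm_int ` F))"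
  have shells: "sup_norm_int ` F \<subseteq> {1..N}"
  proof
    fix j assume "j \<in> sup_norm_int ` F"
    then obtain z where "z \<in> F" "j = sup_norm_int z" by blast
    then show "j \<in> {1..N}" using F sup_norm_int_pos[of z] by (auto simp: N_def)
  qed
  have "(\<Sum>z\<in>F. h (sup_norm_int z)) = (\<Sum>j=1..N. \<Sum>z\<in>{z\<in>F. sup_norm_int z = j}. h (sup_norm_int z))"
    by (rule sum.group[symmetric]) (use F shells in auto)
  also have "\<dots> = (\<Sum>j=1..N. real (card {z\<in>F. sup_norm_int z = j}) * h j)"
    by simp
  also have "\<dots> \<le> (\<Sum>j=1..N. real ((2 * j + 1) ^ CARD('d)) * h j)"
  proof (rule sum_mono)
    fix j
    have "{z\<in>F. sup_norm_int z = j} \<subseteq> int_box j"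
      using in_int_box_sup_norm_int by auto
    then have "card {z\<in>F. sup_norm_int z = j} \<le> (2 * j + 1) ^ CARD('d)"
      using card_mono[OF finite_int_box] card_int_box_le order_trans by blast
    then show "real (card {z\<in>F. sup_norm_int z = j}) * h j \<le> real ((2 * j + 1) ^ CARD('d)) * h j"
      using h_nonneg[of j] by (intro mult_right_mono) (simp_all only: of_nat_le_iff)
  qed
  finally show thesis by (rule that)
qed

lemma lattice_weight_summable:
  fixes A :: "real^'d^'d" and w :: "real \<Rightarrow> real"
  assumes A: "invertible A"
    and w_mono: "antimono_on {0..} w" and w_nonneg: "\<And>r. r \<ge> 0 \<Longrightarrow> w r \<ge> 0"
    and int: "(\<lambda>r. r ^ CARD('d) * w r) integrable_on {0..}"
  shows "(\<lambda>\<rho>. w (norm \<rho>)) summable_on lattice_star A"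
proof -
  obtain c where c: "c > 0" "\<And>x. c * norm x \<le> norm (A *v x)"
    using invertible_norm_bounded_below[OF A] by blast
  obtain M where M: "\<And>N. (\<Sum>j=1..N. real ((2 * j + 1) ^ CARD('d)) * w (c * j)) \<le> M"
    using antimono_weight_shell_series_bounded[OF w_mono w_nonneg int \<open>c > 0\<close>] by blast
  define f where "f = (\<lambda>z. w (norm (A *v of_int_vec z)))"
  have f_le: "f z \<le> w (c * sup_norm_int z)" for z
  proof -
    have "c * sup_norm_int z \<le> norm (A *v of_int_vec z)"
      using sup_norm_int_le_norm[of z] c by (meson mult_left_mono order_trans less_imp_le)
    then show ?thesis
      unfolding f_def using c by (intro monotone_onD[OF w_mono]) auto
  qed
  have "sum f F \<le> M" if "finite F" "F \<subseteq> UNIV - {0}" for F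
  proof -
    have "0 \<notin> F" using that by auto
    moreover have "w (c * j) \<ge> 0" for j :: nat using w_nonneg c by simp
    ultimately obtain N where "(\<Sum>z\<in>F. w (c * sup_norm_int z))
                      \<le> (\<Sum>j=1..N. real ((2 * j + 1) ^ CARD('d)) * w (c * j))"
      by (rule sum_sup_norm_int_shells_le[OF \<open>finite F\<close>])
    then show ?thesis using sum_mono[of F f, OF f_le] M[of N] by linarith
  qed
  then have "f summable_on (UNIV - {0})"
    using w_nonneg by (intro nonneg_bdd_above_summable_on bdd_aboveI2) (auto simp: f_def)
  then show ?thesis
    unfolding lattice_star_eq_image[OF A]
    by (subst summable_on_reindex) (use inj_lattice_coordinates[OF A] in \<open>auto simp: inj_on_def f_def o_def\<close>)
qed

lemma partition_on_singleton_iff: "partition_on {a} P \<longleftrightarrow> P = {{a}}"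
proof
  assume P: "partition_on {a} P"
  then have "p = {a}" if "p \<in> P" for p
    using that partition_onD1[OF P] partition_onD3[OF P] by (metis Union_upper subset_singleton_iff)
  moreover have "P \<noteq> {}" using partition_onD1[OF P] by auto
  ultimately show "P = {{a}}" by blast
qed (simp add: partition_on_space)

lemma grad_V_zero_bound:
  fixes A :: "real^'d^'d"
  assumes A: "invertible A" and "SL A n V" and "n \<ge> 1"
  obtains K w where "Lw CARD('d) 1 w"
    and "\<And>\<rho>. \<rho> \<in> lattice_star A \<Longrightarrow> norm (grad_V V \<rho> (\<lambda>_. 0)) \<le> K * w (norm \<rho>)"
proof -
  obtain w :: "nat \<Rightarrow> real \<Rightarrow> real" and C where
    Lw: "\<forall>k\<in>{1..n}. Lw CARD('d) k (w k)" and
    bound: "\<forall>mm>0. \<forall>lam>0. \<forall>u l cs. (\<lambda>m. m + u m) \<in> adm A mm lam \<and> l \<in> lattice A \<and>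
          1 \<le> length cs \<and> length cs \<le> n \<and> set (map fst cs) \<subseteq> lattice_star A \<longrightarrow>
          \<bar>pd V cs (Dstencil A u l)\<bar> \<le> C (length cs) mm lam *
            (\<Sum>P\<in>{P. partition_on {..<length cs} P}.
               \<Prod>B\<in>P. w (card B) (norm (fst (cs ! Min B))) *
                        (\<Prod>m\<in>B. if fst (cs ! Min B) = fst (cs ! m) then 1 else 0))"
    using \<open>SL A n V\<close> unfolding SL_def by blast
  have w1: "Lw CARD('d) 1 (w 1)" using Lw \<open>n \<ge> 1\<close> by auto
  obtain lam where lam: "lam > 0" "(\<lambda>m. m) \<in> adm A 1 lam"
    using identity_in_adm[OF A] by blast
  have partitions: "{P. partition_on {..<Suc 0} P} = {{{0}}}"
    by (simp add: lessThan_Suc partition_on_singleton_iff)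
  have component_bound: "\<bar>grad_V V \<rho> (\<lambda>_. 0) $ i\<bar> \<le> \<bar>C 1 1 lam\<bar> * w 1 (norm \<rho>)"
    if "\<rho> \<in> lattice_star A" for \<rho> i
  proof -
    let ?cs = "[(\<rho>, i)]"
    have "\<bar>pd V ?cs (Dstencil A (\<lambda>_. 0) 0)\<bar> \<le> C (length ?cs) 1 lam *
            (\<Sum>P\<in>{P. partition_on {..<length ?cs} P}.
               \<Prod>B\<in>P. w (card B) (norm (fst (?cs ! Min B))) *
                        (\<Prod>m\<in>B. if fst (?cs ! Min B) = fst (?cs ! m) then 1 else 0))"
      by (rule bound[rule_format]) (use lam that \<open>n \<ge> 1\<close> zero_in_lattice in auto)
    moreover have "Dstencil A (\<lambda>_. 0) 0 = (\<lambda>_. 0)" by (simp add: Dstencil_def fun_eq_iff)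
    ultimately have "\<bar>pd V ?cs (\<lambda>_. 0)\<bar> \<le> C 1 1 lam * w 1 (norm \<rho>)"
      by (simp add: partitions)
    also have "\<dots> \<le> \<bar>C 1 1 lam\<bar> * w 1 (norm \<rho>)"
      using w1 norm_ge_zero unfolding Lw_def by (meson abs_ge_self less_imp_le mult_right_mono)
    finally show ?thesis by (simp add: grad_V_def)
  qed
  have "norm (grad_V V \<rho> (\<lambda>_. 0)) \<le> (CARD('d) * \<bar>C 1 1 lam\<bar>) * w 1 (norm \<rho>)"
    if "\<rho> \<in> lattice_star A" for \<rho>
  proof -
    have "norm (grad_V V \<rho> (\<lambda>_. 0)) \<le> (\<Sum>i\<in>UNIV. \<bar>grad_V V \<rho> (\<lambda>_. 0) $ i\<bar>)"
      by (rule norm_le_l1_cart)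
    also have "\<dots> \<le> (\<Sum>i\<in>(UNIV::'d set). \<bar>C 1 1 lam\<bar> * w 1 (norm \<rho>))"
      by (rule sum_mono) (rule component_bound[OF that])
    finally show ?thesis by simp
  qed
  with w1 show thesis by (rule that)
qed

lemma has_sum_translate_difference:
  fixes u :: "'a::ab_group_add \<Rightarrow> 'b::real_inner"
  assumes "finite S" "S \<subseteq> L" "\<forall>l\<in>L - S. u l = c"
    and bij: "bij_betw (\<lambda>l. l + \<rho>) L L"
  shows "((\<lambda>l. a \<bullet> (u (l + \<rho>) - u l)) has_sum 0) L"
proof -
  define s where "s = (\<Sum>m\<in>S. a \<bullet> (u m - c))"
  have base: "((\<lambda>l. a \<bullet> (u l - c)) has_sum s) L"
    by (rule has_sum_finite_neutralI) (use assms in \<open>auto simp: s_def\<close>)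
  then have shifted: "((\<lambda>l. a \<bullet> (u (l + \<rho>) - c)) has_sum s) L"
    using has_sum_reindex_bij_betw[OF bij, of "\<lambda>l. a \<bullet> (u l - c)"] by simp
  have "((\<lambda>l. a \<bullet> (u (l + \<rho>) - c) + - (a \<bullet> (u l - c))) has_sum (s + - s)) L"
    by (rule has_sum_add[OF shifted]) (simp add: has_sum_uminus base)
  then show ?thesis by (simp add: inner_diff_right)
qed

lemma summable_on_norm_mult_translate:
  fixes v :: "'a::ab_group_add \<Rightarrow> real"
  assumes v: "(v has_sum V) L" "\<And>l. v l \<ge> 0"
    and bij: "\<forall>\<rho>\<in>P. bij_betw (\<lambda>l. l + \<rho>) L L"
    and F: "(\<lambda>\<rho>. norm (F \<rho>)) summable_on P"
  shows "(\<lambda>(l, \<rho>). norm (F \<rho>) * v (l + \<rho>)) summable_on L \<times> P"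
proof -
  have "(\<lambda>(\<rho>, l). norm (F \<rho>) * v (l + \<rho>)) summable_on P \<times> L"
  proof (rule summable_on_SigmaI)
    show "((\<lambda>l. case (\<rho>, l) of (\<rho>, l) \<Rightarrow> norm (F \<rho>) * v (l + \<rho>)) has_sum norm (F \<rho>) * V) L"
      if "\<rho> \<in> P" for \<rho>
    proof -
      have "((\<lambda>l. v (l + \<rho>)) has_sum V) L"
        using has_sum_reindex_bij_betw[OF bspec[OF bij that], of v] v(1) by simp
      then show ?thesis by (simp add: has_sum_cmult_right)
    qed
    show "(\<lambda>\<rho>. norm (F \<rho>) * V) summable_on P"
      using summable_on_cmult_left[OF F, of V] .
  qed (simp add: v(2))
  then show ?thesis
    by (subst summable_on_swap) (simp add: case_prod_unfold)
qed

lemma abs_summable_translate_difference: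
  fixes u :: "'a::ab_group_add \<Rightarrow> 'b::real_inner"
  assumes S: "finite S" "S \<subseteq> L" and u_const: "\<forall>l\<in>L - S. u l = c"
    and bij: "\<forall>\<rho>\<in>P. bij_betw (\<lambda>l. l + \<rho>) L L"
    and F: "(\<lambda>\<rho>. norm (F \<rho>)) summable_on P"
  shows "(\<lambda>(l, \<rho>). norm (F \<rho> \<bullet> (u (l + \<rho>) - u l))) summable_on L \<times> P"
proof -
  define v where "v l = norm (u l - c)" for l
  define V where "V = (\<Sum>m\<in>S. v m)"
  define \<Phi> where "\<Phi> = (\<Sum>\<^sub>\<infinity>\<rho>\<in>P. norm (F \<rho>))"
  have v_sum: "(v has_sum V) L"
    by (rule has_sum_finite_neutralI) (use assms in \<open>auto simp: V_def v_def\<close>)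
  have F_sum: "((\<lambda>\<rho>. norm (F \<rho>)) has_sum \<Phi>) P"
    using F by (simp add: \<Phi>_def)
  have at_l: "(\<lambda>(l, \<rho>). norm (F \<rho>) * v l) summable_on L \<times> P"
  proof (rule summable_on_SigmaI)
    show "((\<lambda>\<rho>. case (l, \<rho>) of (l, \<rho>) \<Rightarrow> norm (F \<rho>) * v l) has_sum v l * \<Phi>) P" for l
      using has_sum_cmult_right[OF F_sum, of "v l"] by (simp add: mult.commute)
    show "(\<lambda>l. v l * \<Phi>) summable_on L"
      by (rule has_sum_imp_summable[OF has_sum_cmult_left[OF v_sum]])
  qed (simp add: v_def)
  have at_l_plus_\<rho>: "(\<lambda>(l, \<rho>). norm (F \<rho>) * v (l + \<rho>)) summable_on L \<times> P"
    by (rule summable_on_norm_mult_translate[OF v_sum _ bij F]) (simp add: v_def)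
  show ?thesis
  proof (rule summable_on_comparison_test[OF summable_on_add[OF at_l_plus_\<rho> at_l]])
    fix x assume "x \<in> L \<times> P"
    obtain l \<rho> where x: "x = (l, \<rho>)" by fastforce
    have "u (l + \<rho>) - u l = (u (l + \<rho>) - c) - (u l - c)" by simp
    then have diff_le: "norm (u (l + \<rho>) - u l) \<le> v (l + \<rho>) + v l"
      unfolding v_def by (metis norm_triangle_ineq4)
    have "norm (F \<rho> \<bullet> (u (l + \<rho>) - u l)) \<le> norm (F \<rho>) * norm (u (l + \<rho>) - u l)"
      unfolding real_norm_def by (rule Cauchy_Schwarz_ineq2)
    also have "\<dots> \<le> norm (F \<rho>) * (v (l + \<rho>) + v l)"
      using diff_le by (simp add: mult_left_mono)
    finally show "(case x of (l, \<rho>) \<Rightarrow> norm (F \<rho> \<bullet> (u (l + \<rho>) - u l)))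
        \<le> (case x of (l, \<rho>) \<Rightarrow> norm (F \<rho>) * v (l + \<rho>)) + (case x of (l, \<rho>) \<Rightarrow> norm (F \<rho>) * v l)"
      by (simp add: x distrib_left)
  qed auto
qed

lemma infsum_translate_difference_eq_0:
  fixes u :: "'a::ab_group_add \<Rightarrow> 'b::real_inner"
  assumes S: "finite S" "S \<subseteq> L" and u_const: "\<forall>l\<in>L - S. u l = c"
    and bij: "\<forall>\<rho>\<in>P. bij_betw (\<lambda>l. l + \<rho>) L L"
    and F: "(\<lambda>\<rho>. norm (F \<rho>)) summable_on P"
  shows "(\<Sum>\<^sub>\<infinity>l\<in>L. \<Sum>\<^sub>\<infinity>\<rho>\<in>P. F \<rho> \<bullet> (u (l + \<rho>) - u l)) = 0"
proof -
  have "(\<lambda>x. norm ((\<lambda>(l, \<rho>). F \<rho> \<bullet> (u (l + \<rho>) - u l)) x)) summable_on L \<times> P"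
    using abs_summable_translate_difference[OF S u_const bij F] by (simp add: case_prod_unfold)
  then have "(\<lambda>(l, \<rho>). F \<rho> \<bullet> (u (l + \<rho>) - u l)) summable_on L \<times> P"
    by (rule abs_summable_summable)
  then have "(\<Sum>\<^sub>\<infinity>l\<in>L. \<Sum>\<^sub>\<infinity>\<rho>\<in>P. F \<rho> \<bullet> (u (l + \<rho>) - u l))
           = (\<Sum>\<^sub>\<infinity>\<rho>\<in>P. \<Sum>\<^sub>\<infinity>l\<in>L. F \<rho> \<bullet> (u (l + \<rho>) - u l))"
    by (rule infsum_swap_banach)
  also have "\<dots> = 0"
  proof (rule infsum_0)
    fix \<rho> assume "\<rho> \<in> P"
    then show "(\<Sum>\<^sub>\<infinity>l\<in>L. F \<rho> \<bullet> (u (l + \<rho>) - u l)) = 0"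
      using bij by (intro infsumI has_sum_translate_difference[OF S u_const]) blast
  qed
  finally show ?thesis .
qed

text \<open>Only (S.L) is needed.\<close>

theorem mainTheorem3:
  fixes A :: "real^'d^'d" and V :: "(real^'d \<Rightarrow> real^'d) \<Rightarrow> real" and n :: nat
    and u :: "real^'d \<Rightarrow> real^'d"
  assumes "CARD('d) \<in> {2, 3}"
    and "invertible A"
    and "n \<ge> 3"
    and "SR A n V" and "SL A n V" and "SPS A V"
    and "u \<in> Uc A"
  shows "(\<lambda>(l, \<rho>). norm (grad_V V \<rho> (\<lambda>_. 0) \<bullet> (u (l + \<rho>) - u l)))
           summable_on (Sigma (lattice A) (\<lambda>_. lattice_star A))
         \<and> (\<Sum>\<^sub>\<infinity>l\<in>lattice A. \<Sum>\<^sub>\<infinity>\<rho>\<in>lattice_star A. grad_V V \<rho> (\<lambda>_. 0) \<bullet> (u (l + \<rho>) - u l)) = 0"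
proof -
  note A = \<open>invertible A\<close>
  have "n \<ge> 1" using \<open>n \<ge> 3\<close> by simp
  then obtain K w where w: "Lw CARD('d) 1 w"
    and K: "\<And>\<rho>. \<rho> \<in> lattice_star A \<Longrightarrow> norm (grad_V V \<rho> (\<lambda>_. 0)) \<le> K * w (norm \<rho>)"
    using grad_V_zero_bound[OF A \<open>SL A n V\<close>] by blast
  have "(\<lambda>\<rho>. w (norm \<rho>)) summable_on lattice_star A"
    using w by (intro lattice_weight_summable[OF A]) (auto simp: Lw_def less_imp_le)
  then have F: "(\<lambda>\<rho>. norm (grad_V V \<rho> (\<lambda>_. 0))) summable_on lattice_star A"
    by (rule summable_on_comparison_test[OF summable_on_cmult_right]) (use K in auto)
  obtain R c where "\<forall>l \<in> lattice A - ball 0 R. u l = c"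
    using \<open>u \<in> Uc A\<close> unfolding Uc_def by blast
  then have u_const: "\<forall>l \<in> lattice A - (lattice A \<inter> ball 0 R). u l = c" by blast
  have S: "finite (lattice A \<inter> ball 0 R)" "lattice A \<inter> ball 0 R \<subseteq> lattice A"
    using finite_lattice_Int_ball[OF A] by auto
  have bij: "\<forall>\<rho>\<in>lattice_star A. bij_betw (\<lambda>l. l + \<rho>) (lattice A) (lattice A)"
    by (auto simp: lattice_star_def intro: bij_betw_lattice_translate)
  show ?thesis
    using abs_summable_translate_difference[OF S u_const bij F]
      infsum_translate_difference_eq_0[OF S u_const bij F] by simp
qed

end
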